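(* Let $\theta>0$ be a real number and, for integers $N\ge 1$ and $r\ge 0$, let \[ W_N(r)=\sum_{\pi \in \mathfrak{S}_N \text{ $r$-winnable}} \theta^{\pi^{-1}(N)-1}. \] Then $W_N(0)=(N-1)!$, and for $1\le r\le N-1$, \[ W_N(r) = (N-1)!\; r \sum_{i=r}^{N-1} \frac{\theta^i}{i}. \]
   Context: $\mathfrak{S}_N$ is the set of permutations $\pi=[\pi_1\pi_2\cdots\pi_N]$ of $\{1,\dots,N\}$ in one-line notation; $\pi^{-1}(N)$ is the position of the entry $N$. A left-to-right maximum of $\pi$ is an entry $\pi_j$ larger than every $\pi_i$ with $i<j$. For $r\ge 0$, the $r$-positional strategy rejects $\pi_1,\dots,\pi_r$ and then accepts the first subsequent left-to-right maximum (so for $r=0$ it accepts $\pi_1$). The permutation $\pi$ is called $r$-winnable if this strategy accepts the entry $N$. *)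

theory Defs
  imports "HOL-Combinatorics.Combinatorics" Complex_Main
begin

text \<open>A permutation p of {1..N} in one-line notation is a function p with
  p permutes {1..N}; its i-th entry is p i, and the position of the entry N
  is inv p N.\<close>

definition ltr_max :: "(nat \<Rightarrow> nat) \<Rightarrow> nat \<Rightarrow> bool" where
  "ltr_max p j \<longleftrightarrow> (\<forall>i. 1 \<le> i \<and> i < j \<longrightarrow> p i < p j)"

definition strategy_accepts :: "nat \<Rightarrow> nat \<Rightarrow> (nat \<Rightarrow> nat) \<Rightarrow> nat \<Rightarrow> bool" where
  "strategy_accepts N r p j \<longleftrightarrow>
     r < j \<and> j \<le> N \<and> ltr_max p j \<and> (\<forall>k. r < k \<and> k < j \<longrightarrow> \<not> ltr_max p k)"

definition r_winnable :: "nat \<Rightarrow> nat \<Rightarrow> (nat \<Rightarrow> nat) \<Rightarrow> bool" where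
  "r_winnable N r p \<longleftrightarrow> (\<exists>j. strategy_accepts N r p j \<and> p j = N)"

definition W :: "real \<Rightarrow> nat \<Rightarrow> nat \<Rightarrow> real" where
  "W \<theta> N r = (\<Sum>p \<in> {p. p permutes {1..N} \<and> r_winnable N r p}. \<theta> ^ (inv p N - 1))"

end

theory Submission
  imports Defs
begin

text \<open>For r \<ge> 1, a permutation is r-winnable exactly when N sits at some position j > r
  and the largest of the entries before position j sits at a position m \<le> r. Composing with
  the transposition of two positions shows that, for fixed j, each m < j carries the same number
  (N-1)!/(j-1) of such permutations, and all of them have weight \<theta>^(j-1); summing over
  r choices of m and over j gives the formula.\<close>

lemma card_class_eq_by_transpose:
  assumes "a \<in> A" "b \<in> A"
    and closed: "\<And>p x y. p \<in> S \<Longrightarrow> x \<in> A \<Longrightarrow> y \<in> A \<Longrightarrow> P x p \<Longrightarrow>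
                   p \<circ> transpose x y \<in> S \<and> P y (p \<circ> transpose x y)"
  shows "card {p\<in>S. P a p} = card {p\<in>S. P b p}"
proof (rule bij_betw_same_card[of "\<lambda>p. p \<circ> transpose a b"],
       rule bij_betw_byWitness[where f' = "\<lambda>p. p \<circ> transpose a b"])
  show "\<forall>p\<in>{p\<in>S. P a p}. p \<circ> transpose a b \<circ> transpose a b = p"
    "\<forall>p\<in>{p\<in>S. P b p}. p \<circ> transpose a b \<circ> transpose a b = p"
    by (simp_all add: comp_assoc)
  show "(\<lambda>p. p \<circ> transpose a b) ` {p\<in>S. P a p} \<subseteq> {p\<in>S. P b p}"
    using closed assms(1,2) by blast
  show "(\<lambda>p. p \<circ> transpose a b) ` {p\<in>S. P b p} \<subseteq> {p\<in>S. P a p}"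
    using closed[of _ b a] assms(1,2) by (auto simp: transpose_commute)
qed

lemma card_eq_card_index_mult:
  assumes "finite S" "finite A"
    and cover: "\<And>p. p \<in> S \<Longrightarrow> \<exists>m\<in>A. P m p"
    and unique: "\<And>p m m'. p \<in> S \<Longrightarrow> m \<in> A \<Longrightarrow> m' \<in> A \<Longrightarrow> P m p \<Longrightarrow> P m' p \<Longrightarrow> m = m'"
    and class_card: "\<And>m. m \<in> A \<Longrightarrow> card {p\<in>S. P m p} = c"
  shows "card S = card A * c"
proof -
  have "S = (\<Union>m\<in>A. {p\<in>S. P m p})" using cover by blast
  moreover have "card (\<Union>m\<in>A. {p\<in>S. P m p}) = (\<Sum>m\<in>A. card {p\<in>S. P m p})"
    by (rule card_UN_disjoint) (use assms(1,2) unique in auto)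
  ultimately show ?thesis using class_card by simp
qed

lemma card_permutes_with_value:
  assumes "finite S" "a \<in> S" "b \<in> S"
  shows "card {p. p permutes S \<and> p a = b} = fact (card S - 1)"
proof -
  let ?Perms = "{p. p permutes S}"
  have "card ?Perms = card S * card {p\<in>?Perms. p a = b}"
  proof (rule card_eq_card_index_mult[where P = "\<lambda>m p. p m = b"])
    show "finite ?Perms" using assms(1) by (rule finite_permutations)
    show "\<exists>m\<in>S. p m = b" if "p \<in> ?Perms" for p
      using that assms(3) by (metis mem_Collect_eq permutes_inverses(1) permutes_inv permutes_in_image)
    show "m = m'" if "p \<in> ?Perms" "p m = b" "p m' = b" for p m m'
      using that by (metis mem_Collect_eq permutes_inj injD)
    show "card {p\<in>?Perms. p m = b} = card {p\<in>?Perms. p a = b}" if "m \<in> S" for m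
      by (rule card_class_eq_by_transpose[OF that assms(2)])
        (simp add: permutes_compose permutes_swap_id)
  qed (use assms(1) in auto)
  moreover have "card ?Perms = fact (card S)" using card_permutations[OF refl assms(1)] .
  moreover have "card S > 0" using assms(1,2) card_gt_0_iff by blast
  ultimately show ?thesis by (simp add: fact_reduce)
qed

definition prefix_max_at :: "(nat \<Rightarrow> nat) \<Rightarrow> nat \<Rightarrow> nat \<Rightarrow> bool" where
  "prefix_max_at p j m \<longleftrightarrow> (\<forall>i. 1 \<le> i \<and> i < j \<and> i \<noteq> m \<longrightarrow> p i < p m)"

definition prefix_max_class :: "nat \<Rightarrow> nat \<Rightarrow> nat \<Rightarrow> (nat \<Rightarrow> nat) set" where
  "prefix_max_class N j m = {p. p permutes {1..N} \<and> p j = N \<and> prefix_max_at p j m}"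

lemma prefix_max_at_unique:
  assumes "prefix_max_at p j m" "prefix_max_at p j m'" "m \<in> {1..<j}" "m' \<in> {1..<j}"
  shows "m = m'"
  using assms unfolding prefix_max_at_def by (metis atLeastLessThan_iff less_asym)

lemma prefix_max_at_exists:
  assumes "inj p" "1 < j"
  shows "\<exists>m\<in>{1..<j}. prefix_max_at p j m"
proof -
  obtain m where m: "m \<in> {1..<j}" "p m = Max (p ` {1..<j})"
    using Max_in[of "p ` {1..<j}"] assms(2) by fastforce
  have "p i < p m" if "i \<in> {1..<j}" "i \<noteq> m" for i
    using that m assms(1) by (metis Max_ge finite_atLeastLessThan finite_imageI image_eqI
        injD order_le_neq_trans)
  then have "prefix_max_at p j m" unfolding prefix_max_at_def by auto
  with m(1) show ?thesis by blast
qed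

lemma prefix_max_at_transpose:
  assumes "prefix_max_at p j x" "x \<in> {1..<j}" "y \<in> {1..<j}"
  shows "prefix_max_at (p \<circ> transpose x y) j y"
  unfolding prefix_max_at_def
proof (intro allI impI)
  fix i assume i: "1 \<le> i \<and> i < j \<and> i \<noteq> y"
  then have "transpose x y i \<in> {1..<j}" "transpose x y i \<noteq> x"
    using assms(2,3) by (auto simp: transpose_def)
  then show "(p \<circ> transpose x y) i < (p \<circ> transpose x y) y"
    using assms(1) unfolding prefix_max_at_def by simp
qed

lemma card_prefix_max_class:
  assumes "1 \<le> m" "m < j" "j \<le> N"
  shows "card (prefix_max_class N j m) * (j - 1) = fact (N - 1)"
proof -
  let ?S = "{p. p permutes {1..N} \<and> p j = N}"
  have "card ?S = card {1..<j} * card {p\<in>?S. prefix_max_at p j m}"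
  proof (rule card_eq_card_index_mult)
    show "finite ?S"
      using finite_permutations[of "{1..N}"] by (auto intro: finite_subset)
    show "\<exists>m\<in>{1..<j}. prefix_max_at p j m" if "p \<in> ?S" for p
      using that assms prefix_max_at_exists[OF permutes_inj[of p "{1..N}"]] by auto
    show "card {p\<in>?S. prefix_max_at p j k} = card {p\<in>?S. prefix_max_at p j m}"
      if "k \<in> {1..<j}" for k
    proof (rule card_class_eq_by_transpose[OF that])
      show "m \<in> {1..<j}" using assms by simp
      fix p x y assume "p \<in> ?S" "x \<in> {1..<j}" "y \<in> {1..<j}" "prefix_max_at p j x"
      then show "p \<circ> transpose x y \<in> ?S \<and> prefix_max_at (p \<circ> transpose x y) j y"
        using assms by (auto simp: prefix_max_at_transpose permutes_compose permutes_swap_id)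
    qed
  qed (auto intro: prefix_max_at_unique)
  moreover have "card ?S = fact (N - 1)"
    using card_permutes_with_value[of "{1..N}" j N] assms by simp
  moreover have "{p\<in>?S. prefix_max_at p j m} = prefix_max_class N j m"
    unfolding prefix_max_class_def by auto
  ultimately show ?thesis by (simp add: mult.commute)
qed

lemma sum_prefix_max_class:
  assumes "1 \<le> m" "m < j" "j \<le> N"
  shows "(\<Sum>p\<in>prefix_max_class N j m. \<theta> ^ (inv p N - 1)) = \<theta> ^ (j - 1) * fact (N - 1) / real (j - 1)"
proof -
  have "(\<Sum>p\<in>prefix_max_class N j m. \<theta> ^ (inv p N - 1)) = (\<Sum>p\<in>prefix_max_class N j m. \<theta> ^ (j - 1))"
    by (rule sum.cong) (auto simp: prefix_max_class_def permutes_inverses(2))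
  also have "\<dots> = real (card (prefix_max_class N j m)) * \<theta> ^ (j - 1)" by simp
  also have "real (card (prefix_max_class N j m)) = fact (N - 1) / real (j - 1)"
  proof -
    have "real (card (prefix_max_class N j m)) * real (j - 1) = fact (N - 1)"
      using arg_cong[OF card_prefix_max_class[OF assms], of real] by simp
    moreover have "real (j - 1) > 0" using assms by simp
    ultimately show ?thesis by (simp add: field_simps)
  qed
  finally show ?thesis by simp
qed

lemma ltr_max_of_max_value:
  assumes "p permutes {1..N}" "p j = N" "j \<le> N"
  shows "ltr_max p j"
  unfolding ltr_max_def
proof (intro allI impI)
  fix i assume i: "1 \<le> i \<and> i < j"
  then have "p i \<in> {1..N}" using permutes_in_image[OF assms(1), of i] assms(3) by auto
  moreover have "p i \<noteq> p j" using i assms(1) by (metis permutes_inj injD less_irrefl)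
  ultimately show "p i < p j" using assms(2) by auto
qed

lemma r_winnable_0_iff:
  assumes "N \<ge> 1"
  shows "r_winnable N 0 p \<longleftrightarrow> p 1 = N"
proof -
  have "ltr_max p 1" unfolding ltr_max_def by auto
  then have "strategy_accepts N 0 p j \<longleftrightarrow> j = 1" for j
    using assms unfolding strategy_accepts_def by (metis One_nat_def less_one not_gr0 nat_neq_iff)
  then show ?thesis unfolding r_winnable_def by auto
qed

lemma r_winnable_iff_prefix_max:
  assumes "1 \<le> r" and p: "p permutes {1..N}"
  shows "r_winnable N r p \<longleftrightarrow> (\<exists>j\<in>{r<..N}. \<exists>m\<in>{1..r}. p j = N \<and> prefix_max_at p j m)"
proof
  assume "r_winnable N r p"
  then obtain j where j: "r < j" "j \<le> N" "p j = N"
    and no_ltr_max: "\<And>k. r < k \<Longrightarrow> k < j \<Longrightarrow> \<not> ltr_max p k"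
    unfolding r_winnable_def strategy_accepts_def by blast
  have "1 < j" using j(1) assms(1) by simp
  then obtain m where m: "m \<in> {1..<j}" "prefix_max_at p j m"
    using prefix_max_at_exists[OF permutes_inj[OF p]] by blast
  have "ltr_max p m" using m unfolding prefix_max_at_def ltr_max_def by auto
  then have "m \<le> r" using no_ltr_max[of m] m(1) by force
  then show "\<exists>j\<in>{r<..N}. \<exists>m\<in>{1..r}. p j = N \<and> prefix_max_at p j m"
    using j m by (intro bexI[of _ j] bexI[of _ m] conjI) auto
next
  assume "\<exists>j\<in>{r<..N}. \<exists>m\<in>{1..r}. p j = N \<and> prefix_max_at p j m"
  then obtain j m where jm: "r < j" "j \<le> N" "1 \<le> m" "m \<le> r" "p j = N" "prefix_max_at p j m"
    by auto
  have "\<not> ltr_max p k" if "r < k" "k < j" for k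
  proof
    assume "ltr_max p k"
    then have "p m < p k" using that jm unfolding ltr_max_def by auto
    moreover have "p k < p m" using that jm unfolding prefix_max_at_def by auto
    ultimately show False by simp
  qed
  then have "strategy_accepts N r p j"
    using jm ltr_max_of_max_value[OF p] unfolding strategy_accepts_def by blast
  then show "r_winnable N r p" unfolding r_winnable_def using jm(5) by blast
qed

lemma W_0_eq:
  assumes "N \<ge> 1"
  shows "W \<theta> N 0 = fact (N - 1)"
proof -
  have "W \<theta> N 0 = (\<Sum>p\<in>{p. p permutes {1..N} \<and> p 1 = N}. \<theta> ^ (inv p N - 1))"
    unfolding W_def using r_winnable_0_iff[OF assms] by simp
  also have "\<dots> = (\<Sum>p\<in>{p. p permutes {1..N} \<and> p 1 = N}. 1)"
    by (rule sum.cong) (auto simp: permutes_inverses(2))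
  also have "\<dots> = fact (N - 1)"
    using card_permutes_with_value[of "{1..N}" 1 N] assms by simp
  finally show ?thesis .
qed

lemma winnable_eq_Union_prefix_max_class:
  assumes "1 \<le> r"
  shows "{p. p permutes {1..N} \<and> r_winnable N r p}
    = (\<Union>j\<in>{r<..N}. \<Union>m\<in>{1..r}. prefix_max_class N j m)"
  using r_winnable_iff_prefix_max[OF assms] unfolding prefix_max_class_def by blast

lemma finite_prefix_max_class: "finite (prefix_max_class N j m)"
  unfolding prefix_max_class_def
  using finite_permutations[of "{1..N}"] by (auto intro: finite_subset)

lemma prefix_max_class_disjoint_pos:
  assumes "j \<noteq> j'"
  shows "prefix_max_class N j m \<inter> prefix_max_class N j' m' = {}"
proof -
  have "j = j'" if "p permutes {1..N}" "p j = N" "p j' = N" for p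
    using that by (metis permutes_inj injD)
  then show ?thesis using assms unfolding prefix_max_class_def by blast
qed

lemma prefix_max_class_disjoint_argmax:
  assumes "m \<in> {1..<j}" "m' \<in> {1..<j}" "m \<noteq> m'"
  shows "prefix_max_class N j m \<inter> prefix_max_class N j m' = {}"
  using assms prefix_max_at_unique unfolding prefix_max_class_def by blast

lemma W_eq_weighted_sum:
  assumes "1 \<le> r" "r < N"
  shows "W \<theta> N r = fact (N - 1) * real r * (\<Sum>i = r..N - 1. \<theta> ^ i / real i)"
proof -
  let ?f = "\<lambda>p. \<theta> ^ (inv p N - 1)"
  have "W \<theta> N r = (\<Sum>j\<in>{r<..N}. \<Sum>p\<in>(\<Union>m\<in>{1..r}. prefix_max_class N j m). ?f p)"
    unfolding W_def winnable_eq_Union_prefix_max_class[OF assms(1)]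
    by (rule sum.UNION_disjoint)
      (auto simp: finite_prefix_max_class dest: prefix_max_class_disjoint_pos[of _ _ N])
  also have "\<dots> = (\<Sum>j\<in>{r<..N}. \<Sum>m\<in>{1..r}. \<Sum>p\<in>prefix_max_class N j m. ?f p)"
  proof (intro sum.cong refl sum.UNION_disjoint)
    show "\<forall>m\<in>{1..r}. \<forall>m'\<in>{1..r}. m \<noteq> m' \<longrightarrow>
        prefix_max_class N j m \<inter> prefix_max_class N j m' = {}" if "j \<in> {r<..N}" for j
      using that prefix_max_class_disjoint_argmax[of _ j] by auto
  qed (simp_all add: finite_prefix_max_class)
  also have "\<dots> = (\<Sum>j\<in>{r<..N}. real r * (\<theta> ^ (j - 1) * fact (N - 1) / real (j - 1)))"
  proof (intro sum.cong refl)
    fix j assume "j \<in> {r<..N}"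
    then have "(\<Sum>m\<in>{1..r}. \<Sum>p\<in>prefix_max_class N j m. ?f p)
        = (\<Sum>m\<in>{1..r}. \<theta> ^ (j - 1) * fact (N - 1) / real (j - 1))"
      using assms(1) by (intro sum.cong refl sum_prefix_max_class) auto
    then show "(\<Sum>m\<in>{1..r}. \<Sum>p\<in>prefix_max_class N j m. ?f p)
        = real r * (\<theta> ^ (j - 1) * fact (N - 1) / real (j - 1))"
      by simp
  qed
  also have "\<dots> = (\<Sum>j\<in>{Suc r..Suc (N - 1)}. real r * (\<theta> ^ (j - 1) * fact (N - 1) / real (j - 1)))"
    using assms by (intro sum.cong) auto
  also have "\<dots> = (\<Sum>i = r..N - 1. real r * (\<theta> ^ i * fact (N - 1) / real i))"
    by (subst sum.shift_bounds_cl_Suc_ivl) simp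
  also have "\<dots> = fact (N - 1) * real r * (\<Sum>i = r..N - 1. \<theta> ^ i / real i)"
    by (simp add: sum_distrib_left mult_ac)
  finally show ?thesis .
qed

theorem corollary2p2:
  fixes \<theta> :: real and N :: nat
  assumes "\<theta> > 0" and "N \<ge> 1"
  shows "W \<theta> N 0 = fact (N - 1) \<and>
         (\<forall>r. 1 \<le> r \<and> r \<le> N - 1 \<longrightarrow>
           W \<theta> N r = fact (N - 1) * real r * (\<Sum>i = r..N - 1. \<theta> ^ i / real i))"
  using W_0_eq[OF assms(2)] W_eq_weighted_sum[of _ N \<theta>] assms(2) by auto

end
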